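(* Let $N=[n]$ and let $v:2^N\to\mathbb{R}_+$ be any monotone valuation with $v(\emptyset)=0$. For any decision map $X'$ for $v$ and any $\epsilon>0$, there exists an $\epsilon$-Nash equilibrium $p$ of the pricing game defined by $v$ and $X'$ which is welfare maximizing, i.e., $v(X'(p))=\max_{S\subseteq N}v(S)$.
   Context: Pricing game: $N=[n]$ is a set of services, service $i$ controlled by seller $i$. A buyer has valuation $v:2^N\to\mathbb{R}_+$, monotone with $v(\emptyset)=0$. For $p\in\mathbb{R}^n_+$, $p(S)=\sum_{j\in S}p_j$ and $D(v;p)=\arg\max_{S\subseteq N}(v(S)-p(S))$. A decision map is $X':\mathbb{R}^n_+\to 2^N$ with $X'(p)\in D(v;p)$ for all $p$ (not necessarily maximal). Seller $i$'s utility is $u_i(p)=p_i\cdot\mathbf{1}\{i\in X'(p)\}$. An $\epsilon$-Nash equilibrium is a $p$ with $u_i(p)\ge u_i(p_i',p_{-i})-\epsilon$ for all $i$ and $p_i'\in\mathbb{R}_+$. The welfare at $p$ is $v(X'(p))$. *)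

theory Defs
  imports "HOL-Analysis.Analysis"
begin

text \<open>Services are N = {0..<n}. A price vector in R^n_+ is modelled as a function
  nat => real that is nonnegative on N and zero outside N (canonical representative).\<close>

definition price_vecs :: "nat \<Rightarrow> (nat \<Rightarrow> real) set" where
  "price_vecs n = {p. (\<forall>i<n. 0 \<le> p i) \<and> (\<forall>i. n \<le> i \<longrightarrow> p i = 0)}"

definition valuation :: "nat \<Rightarrow> (nat set \<Rightarrow> real) \<Rightarrow> bool" where
  "valuation n v \<longleftrightarrow> v {} = 0 \<and> (\<forall>S. S \<subseteq> {0..<n} \<longrightarrow> 0 \<le> v S) \<and>
     (\<forall>S T. S \<subseteq> T \<and> T \<subseteq> {0..<n} \<longrightarrow> v S \<le> v T)"

definition price_of :: "(nat \<Rightarrow> real) \<Rightarrow> nat set \<Rightarrow> real" where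
  "price_of p S = (\<Sum>j\<in>S. p j)"

definition demand :: "nat \<Rightarrow> (nat set \<Rightarrow> real) \<Rightarrow> (nat \<Rightarrow> real) \<Rightarrow> nat set set" where
  "demand n v p = {S. S \<subseteq> {0..<n} \<and>
     (\<forall>T. T \<subseteq> {0..<n} \<longrightarrow> v T - price_of p T \<le> v S - price_of p S)}"

definition decision_map :: "nat \<Rightarrow> (nat set \<Rightarrow> real) \<Rightarrow> ((nat \<Rightarrow> real) \<Rightarrow> nat set) \<Rightarrow> bool" where
  "decision_map n v X \<longleftrightarrow> (\<forall>p \<in> price_vecs n. X p \<in> demand n v p)"

definition seller_utility :: "((nat \<Rightarrow> real) \<Rightarrow> nat set) \<Rightarrow> nat \<Rightarrow> (nat \<Rightarrow> real) \<Rightarrow> real" where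
  "seller_utility X i p = (if i \<in> X p then p i else 0)"

definition eps_nash :: "nat \<Rightarrow> ((nat \<Rightarrow> real) \<Rightarrow> nat set) \<Rightarrow> real \<Rightarrow> (nat \<Rightarrow> real) \<Rightarrow> bool" where
  "eps_nash n X \<epsilon> p \<longleftrightarrow> p \<in> price_vecs n \<and>
     (\<forall>i<n. \<forall>q::real. 0 \<le> q \<longrightarrow>
        seller_utility X i p \<ge> seller_utility X i (p(i := q)) - \<epsilon>)"

end

theory Submission
  imports Defs
begin

text \<open>Call prices \<open>\<delta>\<close>-feasible if, for every bundle \<open>S\<close>, the services outside \<open>S\<close> cost at most
  the welfare gap \<open>v N - v S\<close>, and at least \<open>\<delta>\<close> less when \<open>S\<close> is suboptimal. Feasible prices
  are bounded by \<open>v N\<close>, so on the grid \<open>\<delta> \<nat>\<^sup>n\<close> there is a feasible vector that no seller can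
  raise by \<open>\<delta>\<close>. Whenever a bundle \<open>S\<close> is demanded at prices agreeing with it outside \<open>S\<close>, the
  gap of \<open>S\<close> is covered by the price of its complement, which feasibility only allows for an
  optimal \<open>S\<close> whose complement is free; hence the buyer's choice maximizes welfare and unsold
  services cost nothing. If seller \<open>i\<close> deviates to \<open>q\<close> and still sells, a bundle \<open>T\<close> with
  \<open>i \<notin> T\<close> whose constraint blocks raising \<open>p\<^sub>i\<close> shows \<open>q < p\<^sub>i + 2\<delta>\<close>, so \<open>2\<delta> \<le> \<epsilon>\<close> gives an
  \<open>\<epsilon>\<close>-Nash equilibrium.\<close>

lemma price_of_Diff:
  "finite A \<Longrightarrow> S \<subseteq> A \<Longrightarrow> price_of p A = price_of p S + price_of p (A - S)"
  unfolding price_of_def by (simp add: sum.subset_diff)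

lemma price_of_upd_notin: "i \<notin> A \<Longrightarrow> price_of (p(i := q)) A = price_of p A"
  unfolding price_of_def by (rule sum.cong) auto

lemma price_of_upd_in:
  assumes "finite A" "i \<in> A"
  shows "price_of (p(i := q)) A = price_of p A - p i + q"
proof -
  have "price_of (p(i := q)) A = q + price_of (p(i := q)) (A - {i})"
    unfolding price_of_def using assms by (simp add: sum.remove)
  moreover have "price_of p A = p i + price_of p (A - {i})"
    unfolding price_of_def using assms by (simp add: sum.remove)
  ultimately show ?thesis by (simp add: price_of_upd_notin)
qed

lemma member_le_price_of:
  "finite A \<Longrightarrow> i \<in> A \<Longrightarrow> (\<And>j. j \<in> A \<Longrightarrow> 0 \<le> p j) \<Longrightarrow> p i \<le> price_of p A"
  unfolding price_of_def by (rule member_le_sum) auto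

lemma valuation_le_full:
  "valuation n v \<Longrightarrow> S \<subseteq> {0..<n} \<Longrightarrow> v S \<le> v {0..<n}"
  unfolding valuation_def by blast

lemma Max_valuation: "valuation n v \<Longrightarrow> Max (v ` Pow {0..<n}) = v {0..<n}"
  by (rule Max_eqI) (auto simp: valuation_le_full)

lemma demand_gap_le_price:
  assumes "S \<in> demand n v p"
  shows "v {0..<n} - v S \<le> price_of p ({0..<n} - S)"
proof -
  have "S \<subseteq> {0..<n}" and "v {0..<n} - price_of p {0..<n} \<le> v S - price_of p S"
    using assms unfolding demand_def by auto
  then show ?thesis using price_of_Diff[of "{0..<n}" S p] by simp
qed

definition gap_feasible :: "nat \<Rightarrow> (nat set \<Rightarrow> real) \<Rightarrow> real \<Rightarrow> (nat \<Rightarrow> real) \<Rightarrow> bool" where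
  "gap_feasible n v \<delta> p \<longleftrightarrow> (\<forall>S \<subseteq> {0..<n}.
     price_of p ({0..<n} - S) \<le> v {0..<n} - v S - (if v S < v {0..<n} then \<delta> else 0))"

lemma gap_feasible_zero:
  assumes "valuation n v" "\<forall>S \<subseteq> {0..<n}. v S < v {0..<n} \<longrightarrow> \<delta> \<le> v {0..<n} - v S"
  shows "gap_feasible n v \<delta> (\<lambda>_. 0)"
  using assms valuation_le_full[OF assms(1)] unfolding gap_feasible_def price_of_def by auto

lemma gap_feasible_price_le:
  assumes "valuation n v" "gap_feasible n v \<delta> p" "0 \<le> \<delta>" "\<forall>j<n. 0 \<le> p j" "i < n"
  shows "p i \<le> v {0..<n}"
proof -
  have "p i \<le> price_of p ({0..<n} - {})"
    using assms(4,5) by (intro member_le_price_of) auto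
  also have "\<dots> \<le> v {0..<n} - v {} - (if v {} < v {0..<n} then \<delta> else 0)"
    using assms(2) unfolding gap_feasible_def by blast
  finally show ?thesis using assms(1,3) unfolding valuation_def by (auto split: if_splits)
qed

lemma gap_feasible_covered_gap:
  assumes "valuation n v" "gap_feasible n v \<delta> p" "0 < \<delta>" "S \<subseteq> {0..<n}"
    and "v {0..<n} - v S \<le> price_of p ({0..<n} - S)"
  shows "v S = v {0..<n} \<and> price_of p ({0..<n} - S) \<le> 0"
proof -
  have "price_of p ({0..<n} - S) \<le> v {0..<n} - v S - (if v S < v {0..<n} then \<delta> else 0)"
    using assms(2,4) unfolding gap_feasible_def by blast
  with assms(3,5) valuation_le_full[OF assms(1,4)] show ?thesis by (auto split: if_splits)
qed

lemma gap_feasible_demand: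
  assumes "valuation n v" "gap_feasible n v \<delta> p" "0 < \<delta>" "S \<in> demand n v p'"
    and "\<forall>j \<in> {0..<n} - S. p' j = p j"
  shows "v S = v {0..<n} \<and> price_of p ({0..<n} - S) \<le> 0"
proof (rule gap_feasible_covered_gap[OF assms(1-3)])
  show "S \<subseteq> {0..<n}" using assms(4) unfolding demand_def by blast
  have "price_of p' ({0..<n} - S) = price_of p ({0..<n} - S)"
    unfolding price_of_def using assms(5) by (intro sum.cong) auto
  then show "v {0..<n} - v S \<le> price_of p ({0..<n} - S)"
    using demand_gap_le_price[OF assms(4)] by simp
qed

lemma gap_feasible_raise_blocked:
  assumes "gap_feasible n v \<delta> p" "\<not> gap_feasible n v \<delta> (p(i := p i + \<delta>))"
    and "0 \<le> \<delta>" "i < n"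
  shows "\<exists>T \<subseteq> {0..<n}. i \<notin> T \<and> v {0..<n} - v T < price_of p ({0..<n} - T) + 2 * \<delta>"
proof -
  obtain T where T: "T \<subseteq> {0..<n}" and blocked:
    "\<not> price_of (p(i := p i + \<delta>)) ({0..<n} - T)
       \<le> v {0..<n} - v T - (if v T < v {0..<n} then \<delta> else 0)"
    using assms(2) unfolding gap_feasible_def by blast
  have i: "i \<notin> T"
    using assms(1) T blocked price_of_upd_notin[of i "{0..<n} - T"]
    unfolding gap_feasible_def by fastforce
  then have "price_of (p(i := p i + \<delta>)) ({0..<n} - T) = price_of p ({0..<n} - T) + \<delta>"
    using assms(4) by (simp add: price_of_upd_in)
  with blocked assms(3) have "v {0..<n} - v T < price_of p ({0..<n} - T) + 2 * \<delta>"
    by (auto split: if_splits)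
  with T i show ?thesis by blast
qed

lemma ex_unraisable_gap_feasible:
  assumes val: "valuation n v" and "0 < \<delta>"
    and gaps: "\<forall>S \<subseteq> {0..<n}. v S < v {0..<n} \<longrightarrow> \<delta> \<le> v {0..<n} - v S"
  obtains p where "p \<in> price_vecs n" "gap_feasible n v \<delta> p"
    "\<forall>i<n. \<not> gap_feasible n v \<delta> (p(i := p i + \<delta>))"
proof -
  define grid :: "(nat \<Rightarrow> nat) \<Rightarrow> nat \<Rightarrow> real" where "grid f = (\<lambda>j. \<delta> * real (f j))" for f
  define K where "K = nat \<lceil>v {0..<n} / \<delta>\<rceil> + 1"
  define P where "P f \<longleftrightarrow> (\<forall>j. f j \<le> K) \<and> (\<forall>j\<ge>n. f j = 0) \<and> gap_feasible n v \<delta> (grid f)" for f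
  have "P (\<lambda>_. 0)"
    using gap_feasible_zero[OF val gaps] unfolding P_def grid_def by simp
  moreover have "sum f {0..<n} < n * K + 1" if "P f" for f
  proof -
    have "sum f {0..<n} \<le> sum (\<lambda>_. K) {0..<n}"
      using that unfolding P_def by (intro sum_mono) auto
    then show ?thesis by simp
  qed
  ultimately obtain f where Pf: "P f" and f_max: "\<And>g. P g \<Longrightarrow> sum g {0..<n} \<le> sum f {0..<n}"
    using ex_has_greatest_nat[of P "\<lambda>_. 0" "\<lambda>f. sum f {0..<n}" "n * K + 1"] by blast
  have nonneg: "0 \<le> grid f j" for j
    using \<open>0 < \<delta>\<close> unfolding grid_def by simp
  have feasible: "gap_feasible n v \<delta> (grid f)"
    using Pf unfolding P_def by blast
  have "grid f \<in> price_vecs n"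
    using Pf nonneg unfolding P_def grid_def price_vecs_def by simp
  moreover have "\<not> gap_feasible n v \<delta> ((grid f)(i := grid f i + \<delta>))" if i: "i < n" for i
  proof
    assume raised: "gap_feasible n v \<delta> ((grid f)(i := grid f i + \<delta>))"
    define g where "g = f(i := Suc (f i))"
    have "grid f i \<le> v {0..<n}"
      using gap_feasible_price_le[OF val feasible] \<open>0 < \<delta>\<close> nonneg i by auto
    then have "real (f i) \<le> v {0..<n} / \<delta>"
      using \<open>0 < \<delta>\<close> unfolding grid_def by (simp add: field_simps)
    then have "f i < K" unfolding K_def by linarith
    moreover have "grid g = (grid f)(i := grid f i + \<delta>)"
      unfolding grid_def g_def by (auto simp: algebra_simps)
    ultimately have "P g"
      using Pf raised i unfolding P_def g_def by auto
    moreover have "sum g {0..<n} = sum f {0..<n} + 1"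
    proof -
      have "sum g ({0..<n} - {i}) = sum f ({0..<n} - {i})"
        unfolding g_def by (intro sum.cong) auto
      then show ?thesis using i by (simp add: sum.remove g_def)
    qed
    ultimately show False using f_max[of g] by simp
  qed
  ultimately show thesis using that feasible by blast
qed

lemma gap_feasible_unsold_free:
  assumes "valuation n v" "gap_feasible n v \<delta> p" "0 < \<delta>" "S \<in> demand n v p"
    and "\<forall>j. 0 \<le> p j" "i \<in> {0..<n} - S"
  shows "p i = 0"
proof -
  have "p i \<le> price_of p ({0..<n} - S)"
    using assms(5,6) by (intro member_le_price_of) auto
  also have "\<dots> \<le> 0"
    using gap_feasible_demand[OF assms(1-4)] by simp
  finally show ?thesis using assms(5) by (simp add: eq_iff)
qed

lemma unraisable_deviation_bound:
  assumes val: "valuation n v" and feasible: "gap_feasible n v \<delta> p" and "0 < \<delta>"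
    and unraisable: "\<forall>i<n. \<not> gap_feasible n v \<delta> (p(i := p i + \<delta>))"
    and i: "i < n" and dev: "S \<in> demand n v (p(i := q))" "i \<in> S"
  shows "q < p i + 2 * \<delta>"
proof -
  have S: "S \<subseteq> {0..<n}" "finite S"
    using dev(1) unfolding demand_def by (auto intro: finite_subset)
  have S_opt: "v S = v {0..<n}" and S_free: "price_of p ({0..<n} - S) \<le> 0"
    using gap_feasible_demand[OF val feasible \<open>0 < \<delta>\<close> dev(1)] dev(2) by auto
  obtain T where T: "T \<subseteq> {0..<n}" "i \<notin> T"
    and T_blocks: "v {0..<n} - v T < price_of p ({0..<n} - T) + 2 * \<delta>"
    using gap_feasible_raise_blocked[OF feasible _ _ i] unraisable \<open>0 < \<delta>\<close> i by auto
  have "v T - price_of (p(i := q)) T \<le> v S - price_of (p(i := q)) S"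
    using dev(1) T(1) unfolding demand_def by blast
  moreover have "price_of p {0..<n} = price_of p T + price_of p ({0..<n} - T)"
    "price_of p {0..<n} = price_of p S + price_of p ({0..<n} - S)"
    using price_of_Diff T(1) S(1) by blast+
  \<comment> \<open>\<open>S\<close> beats \<open>T\<close> at the deviation; as nothing outside \<open>S\<close> is paid for, this says
    \<open>q - p i \<le> v N - v T - p (N - T)\<close>.\<close>
  ultimately show ?thesis
    using S S_opt S_free T T_blocks dev(2) by (simp add: price_of_upd_notin price_of_upd_in)
qed

lemma gap_feasible_eps_nash:
  assumes val: "valuation n v" and dm: "decision_map n v X" and pv: "p \<in> price_vecs n"
    and feasible: "gap_feasible n v \<delta> p" and "0 < \<delta>" "2 * \<delta> \<le> \<epsilon>"
    and unraisable: "\<forall>i<n. \<not> gap_feasible n v \<delta> (p(i := p i + \<delta>))"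
  shows "eps_nash n X \<epsilon> p"
  unfolding eps_nash_def
proof (intro conjI allI impI pv)
  fix i q assume i: "i < n" and "(0::real) \<le> q"
  have p_nonneg: "\<forall>j. 0 \<le> p j"
  proof
    show "0 \<le> p j" for j
      using pv unfolding price_vecs_def by (cases "j < n") auto
  qed
  have "p(i := q) \<in> price_vecs n"
    using pv i \<open>0 \<le> q\<close> unfolding price_vecs_def by auto
  then have dev: "X (p(i := q)) \<in> demand n v (p(i := q))"
    using dm unfolding decision_map_def by blast
  have X: "X p \<in> demand n v p"
    using dm pv unfolding decision_map_def by blast
  show "seller_utility X i (p(i := q)) - \<epsilon> \<le> seller_utility X i p"
  proof (cases "i \<in> X (p(i := q))")
    case False
    then show ?thesis
      using p_nonneg[rule_format, of i] \<open>0 < \<delta>\<close> \<open>2 * \<delta> \<le> \<epsilon>\<close>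
      unfolding seller_utility_def by auto
  next
    case True
    then have "q < p i + 2 * \<delta>"
      using unraisable_deviation_bound[OF val feasible \<open>0 < \<delta>\<close> unraisable i dev] by blast
    moreover have "i \<notin> X p \<Longrightarrow> p i = 0"
      using gap_feasible_unsold_free[OF val feasible \<open>0 < \<delta>\<close> X p_nonneg] i by simp
    ultimately show ?thesis
      using True \<open>2 * \<delta> \<le> \<epsilon>\<close> unfolding seller_utility_def by auto
  qed
qed

lemma ex_welfare_gap_margin:
  fixes v :: "nat set \<Rightarrow> real" and \<epsilon> :: real
  assumes "0 < \<epsilon>"
  shows "\<exists>\<delta>>0. 2 * \<delta> \<le> \<epsilon> \<and> (\<forall>S \<subseteq> {0..<n}. v S < v {0..<n} \<longrightarrow> \<delta> \<le> v {0..<n} - v S)"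
proof -
  define gaps where "gaps = (\<lambda>S. v {0..<n} - v S) ` {S. S \<subseteq> {0..<n} \<and> v S < v {0..<n}}"
  have "finite gaps"
    unfolding gaps_def by (rule finite_imageI, rule finite_subset[of _ "Pow {0..<n}"]) auto
  define \<delta> where "\<delta> = Min (insert (\<epsilon> / 2) gaps)"
  have "0 < \<delta>" unfolding \<delta>_def using \<open>finite gaps\<close> assms by (auto simp: gaps_def)
  moreover have "\<delta> \<le> \<epsilon> / 2"
    unfolding \<delta>_def using \<open>finite gaps\<close> by (intro Min_le) auto
  moreover have "\<forall>g \<in> gaps. \<delta> \<le> g"
    unfolding \<delta>_def using \<open>finite gaps\<close> by auto
  ultimately show ?thesis unfolding gaps_def by auto
qed

theorem mainTheorem4:
  fixes n :: nat and v :: "nat set \<Rightarrow> real" and X :: "(nat \<Rightarrow> real) \<Rightarrow> nat set"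
    and \<epsilon> :: real
  assumes "valuation n v"
    and "decision_map n v X"
    and "\<epsilon> > 0"
  shows "\<exists>p. eps_nash n X \<epsilon> p \<and> v (X p) = Max (v ` Pow {0..<n})"
proof -
  obtain \<delta> where "0 < \<delta>" "2 * \<delta> \<le> \<epsilon>"
    and gaps: "\<forall>S \<subseteq> {0..<n}. v S < v {0..<n} \<longrightarrow> \<delta> \<le> v {0..<n} - v S"
    using ex_welfare_gap_margin[OF assms(3)] by blast
  obtain p where p: "p \<in> price_vecs n" "gap_feasible n v \<delta> p"
    and unraisable: "\<forall>i<n. \<not> gap_feasible n v \<delta> (p(i := p i + \<delta>))"
    using ex_unraisable_gap_feasible[OF assms(1) \<open>0 < \<delta>\<close> gaps] by blast
  have "eps_nash n X \<epsilon> p"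
    using gap_feasible_eps_nash[OF assms(1,2) p \<open>0 < \<delta>\<close> \<open>2 * \<delta> \<le> \<epsilon>\<close> unraisable] .
  moreover have "X p \<in> demand n v p"
    using assms(2) p(1) unfolding decision_map_def by blast
  then have "v (X p) = v {0..<n}"
    using gap_feasible_demand[OF assms(1) p(2) \<open>0 < \<delta>\<close>] by blast
  ultimately show ?thesis using Max_valuation[OF assms(1)] by auto
qed

end
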